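(* There is an absolute constant $c>0$ such that for every sufficiently small $\varepsilon>0$ and every $u\in V$, $d^2_u-k_u\le\frac{c}{\varepsilon^2}(w_u-k_u)$.
   Context: A Correlation Clustering instance consists of a finite vertex set $V$ and a partition $E^+\uplus E^-=\binom V2$ of unordered pairs of distinct vertices into $+$edges and $-$edges. $\mathcal K$ is a partition of $V$ into atoms, and every pair of distinct vertices in a common atom is a $+$edge. For $u\in V$, $K_u$ is the atom containing $u$ and $k_u=|K_u|$. For $u,v\in V$ (possibly equal), $w_{uv}=\frac1{k_uk_v}\sum_{u'\in K_u,v'\in K_v}\mathbf 1[u'v'\text{ is a }+\text{edge or }u'=v']\in[0,1]$, and $w_u=\sum_{v\in V}w_{uv}$. Let $E^1=\{uv:\varepsilon w_v<w_u<w_v/\varepsilon\}$ and $N^1_u=\{v:uv\in E^1\}$ (unordered pairs, $u=v$ allowed). Let $E^2=\{uv: K_u=K_v,\ \text{or}\ uv\in E^1\text{ and }\sum_{p\in N^1_u\cap N^1_v}w_{up}w_{vp}>\varepsilon(w_u+w_v)\}$, and $d^2_u=|\{v\in V: uv\in E^2\}|$. *)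

theory Defs
  imports Complex_Main "HOL-Library.Disjoint_Sets"
begin

text \<open>A Correlation Clustering instance: finite vertex set V (vertices are naturals),
  a symmetric predicate P on distinct pairs of V (P u v means uv is a +edge,
  otherwise a -edge), and a partition K of V into atoms.\<close>

definition cc_instance :: "nat set \<Rightarrow> (nat \<Rightarrow> nat \<Rightarrow> bool) \<Rightarrow> nat set set \<Rightarrow> bool" where
  "cc_instance V P K \<longleftrightarrow> finite V \<and> (\<forall>u\<in>V. \<forall>v\<in>V. P u v = P v u) \<and> partition_on V K
     \<and> (\<forall>A\<in>K. \<forall>x\<in>A. \<forall>y\<in>A. x \<noteq> y \<longrightarrow> P x y)"

definition atom :: "nat set set \<Rightarrow> nat \<Rightarrow> nat set" where
  "atom K u = (THE A. A \<in> K \<and> u \<in> A)"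

definition katom :: "nat set set \<Rightarrow> nat \<Rightarrow> nat" where
  "katom K u = card (atom K u)"

definition wpair :: "(nat \<Rightarrow> nat \<Rightarrow> bool) \<Rightarrow> nat set set \<Rightarrow> nat \<Rightarrow> nat \<Rightarrow> real" where
  "wpair P K u v = (1 / (real (katom K u) * real (katom K v))) *
     (\<Sum>u'\<in>atom K u. \<Sum>v'\<in>atom K v. if P u' v' \<or> u' = v' then 1 else 0)"

definition wvert :: "nat set \<Rightarrow> (nat \<Rightarrow> nat \<Rightarrow> bool) \<Rightarrow> nat set set \<Rightarrow> nat \<Rightarrow> real" where
  "wvert V P K u = (\<Sum>v\<in>V. wpair P K u v)"

definition E1 :: "real \<Rightarrow> nat set \<Rightarrow> (nat \<Rightarrow> nat \<Rightarrow> bool) \<Rightarrow> nat set set \<Rightarrow> nat \<Rightarrow> nat \<Rightarrow> bool" where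
  "E1 \<epsilon> V P K u v \<longleftrightarrow> \<epsilon> * wvert V P K v < wvert V P K u \<and> wvert V P K u < wvert V P K v / \<epsilon>"

definition N1 :: "real \<Rightarrow> nat set \<Rightarrow> (nat \<Rightarrow> nat \<Rightarrow> bool) \<Rightarrow> nat set set \<Rightarrow> nat \<Rightarrow> nat set" where
  "N1 \<epsilon> V P K u = {v \<in> V. E1 \<epsilon> V P K u v}"

definition E2 :: "real \<Rightarrow> nat set \<Rightarrow> (nat \<Rightarrow> nat \<Rightarrow> bool) \<Rightarrow> nat set set \<Rightarrow> nat \<Rightarrow> nat \<Rightarrow> bool" where
  "E2 \<epsilon> V P K u v \<longleftrightarrow> atom K u = atom K v \<or>
     (E1 \<epsilon> V P K u v \<and>
      (\<Sum>p\<in>N1 \<epsilon> V P K u \<inter> N1 \<epsilon> V P K v. wpair P K u p * wpair P K v p)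
        > \<epsilon> * (wvert V P K u + wvert V P K v))"

definition d2 :: "real \<Rightarrow> nat set \<Rightarrow> (nat \<Rightarrow> nat \<Rightarrow> bool) \<Rightarrow> nat set set \<Rightarrow> nat \<Rightarrow> nat" where
  "d2 \<epsilon> V P K u = card {v \<in> V. E2 \<epsilon> V P K u v}"

end

theory Submission
  imports Defs
begin

text \<open>Write \<open>x = w\<^sub>u - k\<^sub>u\<close> for the weight \<open>u\<close> sends outside its atom. An \<open>E\<^sup>2\<close>-neighbour \<open>v\<close>
  outside \<open>K\<^sub>u\<close> is either heavy, \<open>w\<^sub>u\<^sub>v \<ge> \<epsilon>/2\<close>, and there are at most \<open>2x/\<epsilon>\<close> of those; or it
  is light, and then the atom \<open>K\<^sub>u\<close> contributes at most \<open>k\<^sub>u w\<^sub>u\<^sub>v \<le> \<epsilon> w\<^sub>u/2\<close> to the common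
  neighbourhood sum, so \<open>v\<close> must collect more than \<open>\<epsilon> w\<^sub>u/2\<close> through vertices \<open>p \<in> N\<^sup>1\<^sub>u\<close>
  outside \<open>K\<^sub>u\<close>. Summed over all \<open>v\<close>, this mass is \<open>\<Sum>\<^sub>p w\<^sub>u\<^sub>p w\<^sub>p \<le> x w\<^sub>u/\<epsilon>\<close>, because
  \<open>w\<^sub>p < w\<^sub>u/\<epsilon>\<close> on \<open>N\<^sup>1\<^sub>u\<close>; hence there are at most \<open>2x/\<epsilon>\<^sup>2\<close> light neighbours, and
  \<open>c = 4\<close> works for all \<open>\<epsilon> < 1\<close>.\<close>

lemma card_ge_mult_le_sum:
  fixes f :: "'a \<Rightarrow> real"
  assumes "finite A" and "\<And>x. x \<in> A \<Longrightarrow> 0 \<le> f x"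
  shows "t * real (card {x \<in> A. t \<le> f x}) \<le> sum f A"
proof -
  have "t * real (card {x \<in> A. t \<le> f x}) = (\<Sum>x \<in> {x \<in> A. t \<le> f x}. t)"
    by simp
  also have "\<dots> \<le> (\<Sum>x \<in> {x \<in> A. t \<le> f x}. f x)"
    by (rule sum_mono) simp
  also have "\<dots> \<le> sum f A"
    using assms by (intro sum_mono2) auto
  finally show ?thesis .
qed

lemma atom_eqI:
  assumes "partition_on V K" and "A \<in> K" and "u \<in> A"
  shows "atom K u = A"
  unfolding atom_def
proof (rule the_equality)
  fix B assume "B \<in> K \<and> u \<in> B"
  then show "B = A"
    using assms partition_onD2 disjointD by blast
qed (use assms in blast)

lemma atom_in_partition:
  assumes "partition_on V K" and "u \<in> V"
  shows "atom K u \<in> K" and "u \<in> atom K u"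
proof -
  obtain A where "A \<in> K" "u \<in> A"
    using assms partition_onD1 by blast
  then show "atom K u \<in> K" "u \<in> atom K u"
    using atom_eqI[OF assms(1)] by auto
qed

lemma atom_subset:
  assumes "partition_on V K" and "u \<in> V"
  shows "atom K u \<subseteq> V"
  using atom_in_partition[OF assms] partition_onD1[OF assms(1)] by blast

lemma atom_eq_if_mem:
  assumes "partition_on V K" and "u \<in> V" and "v \<in> atom K u"
  shows "atom K v = atom K u"
  using atom_eqI[OF assms(1) atom_in_partition(1)[OF assms(1,2)] assms(3)] .

lemma katom_pos:
  assumes "finite V" and "partition_on V K" and "u \<in> V"
  shows "0 < katom K u"
  using atom_in_partition(2)[OF assms(2,3)] atom_subset[OF assms(2,3)] assms(1)
  unfolding katom_def by (metis card_gt_0_iff empty_iff finite_subset)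

lemma wpair_nonneg: "0 \<le> wpair P K u v"
  unfolding wpair_def by (intro mult_nonneg_nonneg sum_nonneg) auto

lemma wpair_cong_atom: "atom K p = atom K u \<Longrightarrow> wpair P K v p = wpair P K v u"
  by (simp add: wpair_def katom_def)

definition outer_common_weight ::
    "real \<Rightarrow> nat set \<Rightarrow> (nat \<Rightarrow> nat \<Rightarrow> bool) \<Rightarrow> nat set set \<Rightarrow> nat \<Rightarrow> nat \<Rightarrow> real" where
  "outer_common_weight \<epsilon> V P K u v =
     (\<Sum>p\<in>N1 \<epsilon> V P K u - atom K u. wpair P K u p * wpair P K v p)"

context
  fixes V :: "nat set" and P :: "nat \<Rightarrow> nat \<Rightarrow> bool" and K :: "nat set set"
  assumes cc: "cc_instance V P K"
begin

lemma finite_vertices: "finite V"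
  using cc by (simp add: cc_instance_def)

lemma partition_atoms: "partition_on V K"
  using cc by (simp add: cc_instance_def)

lemma wpair_same_atom:
  assumes u: "u \<in> V" and same: "atom K v = atom K u"
  shows "wpair P K u v = 1"
proof -
  let ?A = "atom K u"
  have "P x y \<or> x = y" if "x \<in> ?A" "y \<in> ?A" for x y
    using cc atom_in_partition(1)[OF partition_atoms u] that
    unfolding cc_instance_def by blast
  then have "(\<Sum>x\<in>?A. \<Sum>y\<in>?A. if P x y \<or> x = y then 1 else 0) = (\<Sum>x\<in>?A. \<Sum>y\<in>?A. 1::real)"
    by (intro sum.cong) auto
  then show ?thesis
    using katom_pos[OF finite_vertices partition_atoms u]
    by (simp add: wpair_def same katom_def)
qed

lemma wpair_commute:
  assumes u: "u \<in> V" and v: "v \<in> V"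
  shows "wpair P K u v = wpair P K v u"
proof -
  have "P x y = P y x" if "x \<in> atom K u" "y \<in> atom K v" for x y
    using cc that atom_subset[OF partition_atoms u] atom_subset[OF partition_atoms v]
    unfolding cc_instance_def by blast
  then have "(\<Sum>x\<in>atom K u. \<Sum>y\<in>atom K v. if P x y \<or> x = y then 1 else (0::real))
      = (\<Sum>y\<in>atom K v. \<Sum>x\<in>atom K u. if P y x \<or> y = x then 1 else 0)"
    by (subst sum.swap) (intro sum.cong; auto)
  then show ?thesis
    by (simp add: wpair_def mult.commute)
qed

lemma wvert_eq_katom_plus_outside:
  assumes u: "u \<in> V"
  shows "wvert V P K u = real (katom K u) + (\<Sum>v\<in>V - atom K u. wpair P K u v)"
proof -
  have "wvert V P K u = (\<Sum>v\<in>V - atom K u. wpair P K u v) + (\<Sum>v\<in>atom K u. wpair P K u v)"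
    unfolding wvert_def by (rule sum.subset_diff[OF atom_subset[OF partition_atoms u] finite_vertices])
  moreover have "(\<Sum>v\<in>atom K u. wpair P K u v) = (\<Sum>v\<in>atom K u. 1)"
    by (intro sum.cong refl wpair_same_atom[OF u] atom_eq_if_mem[OF partition_atoms u])
  ultimately show ?thesis
    by (simp add: katom_def)
qed

lemma katom_le_wvert:
  assumes "u \<in> V"
  shows "real (katom K u) \<le> wvert V P K u"
  using wvert_eq_katom_plus_outside[OF assms] by (simp add: sum_nonneg wpair_nonneg)

lemma card_heavy_outside_le:
  assumes u: "u \<in> V" and eps: "0 < \<epsilon>"
  shows "real (card {v \<in> V - atom K u. \<epsilon>/2 \<le> wpair P K u v})
           \<le> 2 / \<epsilon> * (wvert V P K u - real (katom K u))"
  using card_ge_mult_le_sum[of "V - atom K u" "wpair P K u" "\<epsilon>/2"] eps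
    finite_vertices wvert_eq_katom_plus_outside[OF u]
  by (simp add: wpair_nonneg field_simps)

lemma E2_light_neighbour_outer_common_weight:
  assumes u: "u \<in> V" and v: "v \<in> V" and eps: "0 < \<epsilon>"
    and outside: "v \<notin> atom K u" and light: "wpair P K u v < \<epsilon>/2" and E2: "E2 \<epsilon> V P K u v"
  shows "\<epsilon> * wvert V P K u / 2 < outer_common_weight \<epsilon> V P K u v"
proof -
  let ?w = "wpair P K" and ?W = "wvert V P K" and ?Ku = "atom K u"
  define M where "M = N1 \<epsilon> V P K u \<inter> N1 \<epsilon> V P K v"
  have fM: "finite M"
    unfolding M_def N1_def using finite_vertices by simp
  have "atom K v \<noteq> ?Ku"
    using atom_in_partition(2)[OF partition_atoms v] outside by auto
  then have common: "\<epsilon> * (?W u + ?W v) < (\<Sum>p\<in>M. ?w u p * ?w v p)"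
    using E2 unfolding E2_def M_def by auto
  have "(\<Sum>p\<in>M \<inter> ?Ku. ?w u p * ?w v p) = (\<Sum>p\<in>M \<inter> ?Ku. ?w u v)"
  proof (rule sum.cong[OF refl])
    fix p assume "p \<in> M \<inter> ?Ku"
    then have p: "atom K p = ?Ku"
      using atom_eq_if_mem[OF partition_atoms u] by blast
    show "?w u p * ?w v p = ?w u v"
      using wpair_same_atom[OF u p] wpair_cong_atom[OF p] wpair_commute[OF u v] by simp
  qed
  also have "\<dots> \<le> real (katom K u) * ?w u v"
    using card_mono[OF finite_subset[OF atom_subset[OF partition_atoms u] finite_vertices]]
    by (simp add: katom_def mult_right_mono wpair_nonneg)
  also have "\<dots> \<le> ?W u * (\<epsilon>/2)"
    using light katom_le_wvert[OF u] by (intro mult_mono) (auto simp: wpair_nonneg)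
  finally have inside: "(\<Sum>p\<in>M \<inter> ?Ku. ?w u p * ?w v p) \<le> ?W u * (\<epsilon>/2)" .
  have "(\<Sum>p\<in>M - ?Ku. ?w u p * ?w v p) \<le> outer_common_weight \<epsilon> V P K u v"
    unfolding outer_common_weight_def using finite_vertices
    by (intro sum_mono2) (auto simp: M_def N1_def wpair_nonneg)
  moreover have "0 \<le> \<epsilon> * ?W v"
    using eps by (simp add: wvert_def sum_nonneg wpair_nonneg)
  ultimately show ?thesis
    using common inside sum.Int_Diff[OF fM, of "\<lambda>p. ?w u p * ?w v p" ?Ku] by argo
qed

lemma sum_outer_common_weight_le:
  assumes u: "u \<in> V" and eps: "0 < \<epsilon>"
  shows "(\<Sum>v\<in>V. outer_common_weight \<epsilon> V P K u v)
           \<le> (wvert V P K u - real (katom K u)) * (wvert V P K u / \<epsilon>)"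
proof -
  let ?w = "wpair P K" and ?W = "wvert V P K" and ?N = "N1 \<epsilon> V P K u - atom K u"
  have NV: "?N \<subseteq> V - atom K u"
    unfolding N1_def by auto
  have "(\<Sum>v\<in>V. outer_common_weight \<epsilon> V P K u v) = (\<Sum>p\<in>?N. ?w u p * (\<Sum>v\<in>V. ?w p v))"
    unfolding outer_common_weight_def using NV wpair_commute
    by (auto simp: sum.swap[of _ V] sum_distrib_left intro!: sum.cong)
  also have "\<dots> \<le> (\<Sum>p\<in>?N. ?w u p * (?W u / \<epsilon>))"
  proof (rule sum_mono)
    fix p assume "p \<in> ?N"
    then have "\<epsilon> * ?W p < ?W u"
      unfolding N1_def E1_def by auto
    then show "?w u p * (\<Sum>v\<in>V. ?w p v) \<le> ?w u p * (?W u / \<epsilon>)"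
      using eps by (intro mult_left_mono wpair_nonneg) (simp add: wvert_def field_simps)
  qed
  also have "\<dots> = (\<Sum>p\<in>?N. ?w u p) * (?W u / \<epsilon>)"
    by (rule sum_distrib_right[symmetric])
  also have "\<dots> \<le> (?W u - real (katom K u)) * (?W u / \<epsilon>)"
  proof (rule mult_right_mono)
    show "(\<Sum>p\<in>?N. ?w u p) \<le> ?W u - real (katom K u)"
      using wvert_eq_katom_plus_outside[OF u] NV finite_vertices
      by (simp add: sum_mono2 wpair_nonneg)
    show "0 \<le> ?W u / \<epsilon>"
      using eps katom_le_wvert[OF u] by simp
  qed
  finally show ?thesis .
qed

lemma card_light_E2_outside_le:
  assumes u: "u \<in> V" and eps: "0 < \<epsilon>"
  shows "real (card {v \<in> V - atom K u. wpair P K u v < \<epsilon>/2 \<and> E2 \<epsilon> V P K u v})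
           \<le> 2 / \<epsilon>^2 * (wvert V P K u - real (katom K u))"
proof -
  let ?light = "{v \<in> V - atom K u. wpair P K u v < \<epsilon>/2 \<and> E2 \<epsilon> V P K u v}"
  define W where "W = wvert V P K u"
  define x where "x = W - real (katom K u)"
  define t where "t = \<epsilon> * W / 2"
  have W: "0 < W"
    using katom_le_wvert[OF u] katom_pos[OF finite_vertices partition_atoms u] unfolding W_def
    by linarith
  have "?light \<subseteq> {v \<in> V. t \<le> outer_common_weight \<epsilon> V P K u v}"
  proof
    fix v assume "v \<in> ?light"
    then show "v \<in> {v \<in> V. t \<le> outer_common_weight \<epsilon> V P K u v}"
      using E2_light_neighbour_outer_common_weight[OF u _ eps, of v] unfolding t_def W_def by auto
  qed
  then have "t * real (card ?light)
      \<le> t * real (card {v \<in> V. t \<le> outer_common_weight \<epsilon> V P K u v})"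
    using eps W finite_vertices unfolding t_def by (intro mult_left_mono) (simp_all add: card_mono)
  also have "\<dots> \<le> (\<Sum>v\<in>V. outer_common_weight \<epsilon> V P K u v)"
    using finite_vertices
    by (intro card_ge_mult_le_sum) (auto simp: outer_common_weight_def sum_nonneg wpair_nonneg)
  also have "\<dots> \<le> x * (W / \<epsilon>)"
    unfolding x_def W_def by (rule sum_outer_common_weight_le[OF u eps])
  finally have "(\<epsilon> / 2 * real (card ?light)) * W \<le> (x / \<epsilon>) * W"
    unfolding t_def by (simp add: mult_ac)
  then have "\<epsilon> / 2 * real (card ?light) \<le> x / \<epsilon>"
    using W by (rule mult_right_le_imp_le)
  then show ?thesis
    using eps unfolding x_def W_def by (simp add: field_simps power2_eq_square)
qed

lemma d2_minus_katom_le: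
  assumes u: "u \<in> V" and eps: "0 < \<epsilon>" "\<epsilon> \<le> 1"
  shows "real (d2 \<epsilon> V P K u) - real (katom K u)
           \<le> 4 / \<epsilon>^2 * (wvert V P K u - real (katom K u))"
proof -
  let ?x = "wvert V P K u - real (katom K u)"
  let ?heavy = "{v \<in> V - atom K u. \<epsilon>/2 \<le> wpair P K u v}"
  let ?light = "{v \<in> V - atom K u. wpair P K u v < \<epsilon>/2 \<and> E2 \<epsilon> V P K u v}"
  have "{v \<in> V. E2 \<epsilon> V P K u v} \<subseteq> atom K u \<union> ?heavy \<union> ?light"
    by auto
  then have "d2 \<epsilon> V P K u \<le> card (atom K u \<union> ?heavy \<union> ?light)"
    unfolding d2_def using finite_vertices atom_subset[OF partition_atoms u]
    by (intro card_mono) (auto intro: finite_subset)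
  also have "\<dots> \<le> katom K u + card ?heavy + card ?light"
    unfolding katom_def by (meson card_Un_le add_le_mono1 order_trans)
  finally have "real (d2 \<epsilon> V P K u) - real (katom K u) \<le> real (card ?heavy) + real (card ?light)"
    by linarith
  moreover have "2 / \<epsilon> * ?x \<le> 2 / \<epsilon>^2 * ?x"
    using eps katom_le_wvert[OF u]
    by (intro mult_right_mono divide_left_mono) (auto simp: power2_eq_square mult_le_cancel_right1)
  moreover have "4 / \<epsilon>^2 * ?x = 2 / \<epsilon>^2 * ?x + 2 / \<epsilon>^2 * ?x"
    by simp
  ultimately show ?thesis
    using card_heavy_outside_le[OF u eps(1)] card_light_E2_outside_le[OF u eps(1)] by argo
qed

end

theorem lemma12:
  "\<exists>c>0. \<exists>\<epsilon>0>0. \<forall>\<epsilon>::real. 0 < \<epsilon> \<and> \<epsilon> < \<epsilon>0 \<longrightarrow>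
     (\<forall>V P K u. cc_instance V P K \<and> u \<in> V \<longrightarrow>
        real (d2 \<epsilon> V P K u) - real (katom K u)
          \<le> c / \<epsilon>^2 * (wvert V P K u - real (katom K u)))"
  using d2_minus_katom_le
  by (intro exI[of _ 4] conjI exI[of _ 1]) (auto intro!: less_imp_le)

end
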